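(* Consider a qubit with two measurement settings $x,y\in\{0,1\}$, outcomes $\pm$, arbitrary instruments (the same instrument used for the same setting at both time steps), and let $p(ab|xy)$ be the probability of outcome $a$ for measurement $x$ at the first time step on the initial state followed by outcome $b$ for measurement $y$ at the second step; set $\mathcal{B}_1=p(++|00)+p(++|11)+p(+-|01)+p(+-|10)$. For $p,w_{+|0},w_{+|1}\in[0,1]$, let $B_1(p,w_{+|0},w_{+|1})$ be the maximum of $\mathcal{B}_1$ over all initial states with Bloch vector length $p$ and all instruments such that the post-measurement state after measurement $i$ with outcome $+$ has Bloch vector length $w_{+|i}$, $i=0,1$. Then, for fixed $p$ and fixed $w_{+|1-i}$, $B_1(p,w_{+|0},w_{+|1})$ is monotonically non-decreasing as a function of $w_{+|i}$ (equivalently of the purity $\frac12(1+w_{+|i}^2)$). In particular $B_1(p,w_{\max},w_{\max})\ge B_1(p,w_{+|0},w_{+|1})$ where $w_{\max}=\max_i w_{+|i}$.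
   Context: A qubit state is $\varrho=\frac12(\mathbb{1}+r\,\vec\alpha\cdot\vec\sigma)$ with $|\vec\alpha|=1$, $0\le r\le1$ the Bloch vector length, and purity $\frac12(1+r^2)$. An instrument is a collection of completely positive maps indexed by outcomes whose sum is trace preserving. *)

theory Defs
  imports "HOL-Analysis.Analysis"
begin

type_synonym qmat = "complex^2^2"

definition qtrace :: "qmat \<Rightarrow> complex" where
  "qtrace A = (\<Sum>i\<in>UNIV. A $ i $ i)"

definition qscale :: "complex \<Rightarrow> qmat \<Rightarrow> qmat" where
  "qscale c A = (\<chi> i j. c * A $ i $ j)"

definition pauli_x :: qmat where
  "pauli_x = (\<chi> i j. if i \<noteq> j then 1 else 0)"
definition pauli_y :: qmat where
  "pauli_y = (\<chi> i j. if i = 0 \<and> j = 1 then - \<i> else if i = 1 \<and> j = 0 then \<i> else 0)"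
definition pauli_z :: qmat where
  "pauli_z = (\<chi> i j. if i = j then (if i = 0 then 1 else -1) else 0)"

text \<open>Bloch vector r of rho = 1/2 (1 + r . sigma): r_k = tr(rho sigma_k); its length.\<close>
definition bloch_len :: "qmat \<Rightarrow> real" where
  "bloch_len \<rho> = sqrt ((Re (qtrace (\<rho> ** pauli_x)))\<^sup>2 + (Re (qtrace (\<rho> ** pauli_y)))\<^sup>2
                       + (Re (qtrace (\<rho> ** pauli_z)))\<^sup>2)"

text \<open>Positive semidefiniteness of an (n*2)x(n*2) matrix given as an n x n array of 2x2 blocks
  (block (k,l) for k,l < n): v^* X v is real and nonnegative for every vector v.\<close>
definition psd_blocks :: "nat \<Rightarrow> (nat \<Rightarrow> nat \<Rightarrow> qmat) \<Rightarrow> bool" where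
  "psd_blocks n X \<longleftrightarrow> (\<forall>v :: nat \<Rightarrow> complex^2.
     (let q = (\<Sum>k<n. \<Sum>l<n. \<Sum>i\<in>UNIV. cnj (v k $ i) * ((X k l *v v l) $ i))
      in Im q = 0 \<and> Re q \<ge> 0))"

definition psd :: "qmat \<Rightarrow> bool" where
  "psd A \<longleftrightarrow> psd_blocks 1 (\<lambda>_ _. A)"

definition density :: "qmat \<Rightarrow> bool" where
  "density \<rho> \<longleftrightarrow> psd \<rho> \<and> qtrace \<rho> = 1"

definition clinear_map :: "(qmat \<Rightarrow> qmat) \<Rightarrow> bool" where
  "clinear_map \<Phi> \<longleftrightarrow> (\<forall>A B. \<Phi> (A + B) = \<Phi> A + \<Phi> B) \<and> (\<forall>c A. \<Phi> (qscale c A) = qscale c (\<Phi> A))"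

text \<open>Complete positivity: id_n \<otimes> Phi is a positive map for every n.\<close>
definition completely_positive :: "(qmat \<Rightarrow> qmat) \<Rightarrow> bool" where
  "completely_positive \<Phi> \<longleftrightarrow> clinear_map \<Phi> \<and>
     (\<forall>n X. psd_blocks n X \<longrightarrow> psd_blocks n (\<lambda>k l. \<Phi> (X k l)))"

text \<open>A two-outcome instrument (outcome True = +, False = -): CP maps whose sum is trace preserving.\<close>
definition instrument :: "(bool \<Rightarrow> qmat \<Rightarrow> qmat) \<Rightarrow> bool" where
  "instrument J \<longleftrightarrow> (\<forall>a. completely_positive (J a)) \<and>
     (\<forall>A. qtrace (J True A + J False A) = qtrace A)"

text \<open>I x a : operation of setting x (0 or 1) with outcome a. p(ab|xy) = tr(I_{b|y}(I_{a|x}(rho))).\<close>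
definition seq_prob :: "qmat \<Rightarrow> (nat \<Rightarrow> bool \<Rightarrow> qmat \<Rightarrow> qmat) \<Rightarrow> bool \<Rightarrow> bool \<Rightarrow> nat \<Rightarrow> nat \<Rightarrow> real" where
  "seq_prob \<rho> I a b x y = Re (qtrace (I y b (I x a \<rho>)))"

definition B1_expr :: "qmat \<Rightarrow> (nat \<Rightarrow> bool \<Rightarrow> qmat \<Rightarrow> qmat) \<Rightarrow> real" where
  "B1_expr \<rho> I = seq_prob \<rho> I True True 0 0 + seq_prob \<rho> I True True 1 1
                 + seq_prob \<rho> I True False 0 1 + seq_prob \<rho> I True False 1 0"

definition post_state :: "qmat \<Rightarrow> (nat \<Rightarrow> bool \<Rightarrow> qmat \<Rightarrow> qmat) \<Rightarrow> nat \<Rightarrow> qmat" where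
  "post_state \<rho> I x = qscale (1 / qtrace (I x True \<rho>)) (I x True \<rho>)"

definition B1_feasible :: "real \<Rightarrow> real \<Rightarrow> real \<Rightarrow> real set" where
  "B1_feasible p w0 w1 = {B1_expr \<rho> I | \<rho> I.
     density \<rho> \<and> bloch_len \<rho> = p \<and> instrument (I 0) \<and> instrument (I 1) \<and>
     Re (qtrace (I 0 True \<rho>)) > 0 \<and> Re (qtrace (I 1 True \<rho>)) > 0 \<and>
     bloch_len (post_state \<rho> I 0) = w0 \<and> bloch_len (post_state \<rho> I 1) = w1}"

definition B1 :: "real \<Rightarrow> real \<Rightarrow> real \<Rightarrow> real" where
  "B1 p w0 w1 = Sup (B1_feasible p w0 w1)"

end

theory Submission
  imports Defs
begin

text \<open>
  Let setting 0 with outcome \<open>+\<close> occur with probability \<open>t\<close> and leave the post-measurement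
  state \<open>\<sigma>\<close>. Then \<open>\<sigma>\<close> enters \<open>B\<^sub>1\<close> only as the input of the second measurement in
  \<open>p(++|00)\<close> and \<open>p(+-|01)\<close>, i.e. through \<open>t (tr I\<^sub>+\<^sub>|\<^sub>0(\<sigma>) + tr I\<^sub>-\<^sub>|\<^sub>1(\<sigma>))\<close>, which is affine
  in \<open>\<sigma>\<close>. Replacing \<open>I\<^sub>+\<^sub>|\<^sub>0\<close> by the measure-and-prepare map \<open>A \<mapsto> tr I\<^sub>+\<^sub>|\<^sub>0(A) \<tau>\<close> keeps all
  other terms and turns the post-measurement state into \<open>\<tau>\<close>. A state of Bloch length
  \<open>w\<^sub>0 \<le> w\<close> is a mixture of two antipodal states of Bloch length \<open>w\<close>, and the affine functional
  is maximised at one of them; so every value of \<open>B\<^sub>1\<close> at \<open>w\<^sub>0\<close> is dominated by one at \<open>w\<close>.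
  Exchanging the two settings gives monotonicity in the other argument.
\<close>

lemma UNIV_2_eq: "(UNIV :: 2 set) = {0, 1}"
proof -
  have two: "(2::2) = 0" by simp
  show ?thesis using UNIV_2 unfolding two by (simp add: insert_commute)
qed

lemma all_2_iff: "(\<forall>i :: 2. P i) \<longleftrightarrow> P 0 \<and> P 1"
  by (metis UNIV_2_eq UNIV_I insertE singletonD)

lemma sum_UNIV_2: "(\<Sum>i\<in>(UNIV :: 2 set). f i) = f 0 + f 1"
  unfolding UNIV_2_eq by simp

lemma qmat_eq_iff:
  "(A :: qmat) = B \<longleftrightarrow> A$0$0 = B$0$0 \<and> A$0$1 = B$0$1 \<and> A$1$0 = B$1$0 \<and> A$1$1 = B$1$1"
  by (auto simp: vec_eq_iff all_2_iff)

lemma qtrace_add: "qtrace (A + B) = qtrace A + qtrace B"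
  unfolding qtrace_def by (simp add: sum.distrib)

lemma qtrace_qscale: "qtrace (qscale c A) = c * qtrace A"
  unfolding qtrace_def qscale_def by (simp add: sum_distrib_left)

lemma qscale_qscale: "qscale a (qscale b A) = qscale (a * b) A"
  unfolding qscale_def by (simp add: vec_eq_iff)

lemma qscale_one: "qscale 1 A = A"
  unfolding qscale_def by (simp add: vec_eq_iff)

lemma qscale_add_left: "qscale (a + b) A = qscale a A + qscale b A"
  unfolding qscale_def by (simp add: vec_eq_iff algebra_simps)

lemma qscale_add_right: "qscale c (A + B) = qscale c A + qscale c B"
  unfolding qscale_def by (simp add: vec_eq_iff algebra_simps)

section \<open>Bloch parametrisation\<close>

text \<open>The matrix \<open>(1 + x \<sigma>\<^sub>x + y \<sigma>\<^sub>y + z \<sigma>\<^sub>z) / 2\<close>, written out entrywise.\<close>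
definition bloch_mat :: "real \<Rightarrow> real \<Rightarrow> real \<Rightarrow> qmat" where
  "bloch_mat x y z = (\<chi> i j.
     if i = 0 then (if j = 0 then complex_of_real ((1 + z) / 2) else Complex (x / 2) (- y / 2))
     else (if j = 0 then Complex (x / 2) (y / 2) else complex_of_real ((1 - z) / 2)))"

lemma bloch_len_bloch_mat: "bloch_len (bloch_mat x y z) = sqrt (x\<^sup>2 + y\<^sup>2 + z\<^sup>2)"
  unfolding bloch_len_def qtrace_def bloch_mat_def pauli_x_def pauli_y_def pauli_z_def
    matrix_matrix_mult_def
  by (simp add: sum_UNIV_2) (simp add: power2_eq_square field_simps)

lemma qtrace_bloch_mat: "qtrace (bloch_mat x y z) = 1"
  unfolding qtrace_def bloch_mat_def by (simp add: sum_UNIV_2 complex_eq_iff) (simp add: field_simps)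

lemma bloch_mat_convex_comb:
  assumes "a + b = 1"
  shows "bloch_mat (a * x + b * x') (a * y + b * y') (a * z + b * z')
       = qscale (complex_of_real a) (bloch_mat x y z) + qscale (complex_of_real b) (bloch_mat x' y' z')"
  using assms unfolding qmat_eq_iff
  by (simp add: bloch_mat_def qscale_def complex_eq_iff field_simps)

lemma hermitian_eq_bloch_mat:
  assumes "Im (A$0$0) = 0" "Im (A$1$1) = 0" "A$1$0 = cnj (A$0$1)" "qtrace A = 1"
  shows "A = bloch_mat (Re (qtrace (A ** pauli_x))) (Re (qtrace (A ** pauli_y)))
                       (Re (qtrace (A ** pauli_z)))"
  using assms unfolding qmat_eq_iff
  by (simp add: bloch_mat_def qtrace_def pauli_x_def pauli_y_def pauli_z_def
      matrix_matrix_mult_def sum_UNIV_2 complex_eq_iff)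

lemma bloch_mat_antipodal_split:
  assumes "sqrt (x\<^sup>2 + y\<^sup>2 + z\<^sup>2) \<le> w" "w \<le> 1"
  obtains a x' y' z' where "0 \<le> a" "a \<le> 1" "sqrt (x'\<^sup>2 + y'\<^sup>2 + z'\<^sup>2) = w"
    "bloch_mat x y z = qscale (complex_of_real a) (bloch_mat x' y' z')
                     + qscale (complex_of_real (1 - a)) (bloch_mat (- x') (- y') (- z'))"
proof -
  define r where "r = sqrt (x\<^sup>2 + y\<^sup>2 + z\<^sup>2)"
  have "0 \<le> r" "r \<le> w" using assms(1) unfolding r_def by simp_all
  define nx where "nx = (if r = 0 then 0 else x / r)"
  define ny where "ny = (if r = 0 then 0 else y / r)"
  define nz where "nz = (if r = 0 then 1 else z / r)"
  have r2: "r\<^sup>2 = x\<^sup>2 + y\<^sup>2 + z\<^sup>2" unfolding r_def by simp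
  have unit: "nx\<^sup>2 + ny\<^sup>2 + nz\<^sup>2 = 1"
  proof (cases "r = 0")
    case False
    then have "nx\<^sup>2 + ny\<^sup>2 + nz\<^sup>2 = (x\<^sup>2 + y\<^sup>2 + z\<^sup>2) / r\<^sup>2"
      unfolding nx_def ny_def nz_def by (simp add: power_divide add_divide_distrib)
    then show ?thesis using False by (simp flip: r2)
  qed (simp add: nx_def ny_def nz_def)
  have xyz: "x = r * nx" "y = r * ny" "z = r * nz"
    using r2 unfolding nx_def ny_def nz_def by (auto simp: add_nonneg_eq_0_iff)
  \<comment> \<open>Bloch vector \<open>r n\<close> is the \<open>(1 + r/w)/2 : (1 - r/w)/2\<close> mixture of \<open>w n\<close> and \<open>-w n\<close>.\<close>
  define a where "a = (1 + r / w) / 2"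
  have "(2 * a - 1) * w = r"
    using \<open>0 \<le> r\<close> \<open>r \<le> w\<close> unfolding a_def by (cases "w = 0") (auto simp: field_simps)
  have a: "0 \<le> a" "a \<le> 1"
    using \<open>0 \<le> r\<close> \<open>r \<le> w\<close> unfolding a_def by (auto simp: divide_le_eq_1)
  have len: "sqrt ((w * nx)\<^sup>2 + (w * ny)\<^sup>2 + (w * nz)\<^sup>2) = w"
    using unit \<open>0 \<le> r\<close> \<open>r \<le> w\<close> by (simp add: power_mult_distrib flip: distrib_left)
  have "bloch_mat x y z = bloch_mat (a * (w * nx) + (1 - a) * - (w * nx))
      (a * (w * ny) + (1 - a) * - (w * ny)) (a * (w * nz) + (1 - a) * - (w * nz))"
    unfolding xyz \<open>(2 * a - 1) * w = r\<close>[symmetric] by (simp add: algebra_simps)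
  also have "\<dots> = qscale (complex_of_real a) (bloch_mat (w * nx) (w * ny) (w * nz))
      + qscale (complex_of_real (1 - a)) (bloch_mat (- (w * nx)) (- (w * ny)) (- (w * nz)))"
    by (rule bloch_mat_convex_comb) simp
  finally show ?thesis using that a len by blast
qed

section \<open>Positive semidefinite matrices\<close>

definition block_qform :: "nat \<Rightarrow> (nat \<Rightarrow> nat \<Rightarrow> qmat) \<Rightarrow> (nat \<Rightarrow> complex^2) \<Rightarrow> complex" where
  "block_qform n X v = (\<Sum>k<n. \<Sum>l<n. \<Sum>i\<in>UNIV. cnj (v k $ i) * ((X k l *v v l) $ i))"

lemma psd_blocks_iff_block_qform:
  "psd_blocks n X \<longleftrightarrow> (\<forall>v. Im (block_qform n X v) = 0 \<and> Re (block_qform n X v) \<ge> 0)"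
  unfolding psd_blocks_def block_qform_def Let_def ..

lemma block_qform_add: "block_qform n (\<lambda>k l. X k l + Y k l) v = block_qform n X v + block_qform n Y v"
  unfolding block_qform_def
  by (simp add: matrix_vector_mult_add_rdistrib sum.distrib algebra_simps)

definition qform :: "qmat \<Rightarrow> complex^2 \<Rightarrow> complex" where
  "qform A v = (\<Sum>i\<in>UNIV. cnj (v $ i) * ((A *v v) $ i))"

lemma psd_iff_qform: "psd A \<longleftrightarrow> (\<forall>v. Im (qform A v) = 0 \<and> Re (qform A v) \<ge> 0)"
  unfolding psd_def psd_blocks_iff_block_qform block_qform_def qform_def
  by (auto dest: spec[of _ "\<lambda>_. _"])

lemma qform_vector:
  "qform A (\<chi> i. if i = 0 then a else b)
     = cnj a * (A$0$0 * a + A$0$1 * b) + cnj b * (A$1$0 * a + A$1$1 * b)"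
  unfolding qform_def matrix_vector_mult_def by (simp add: sum_UNIV_2)

lemma psd_entries:
  assumes "psd A"
  shows "Im (A$0$0) = 0" "Im (A$1$1) = 0" "A$1$0 = cnj (A$0$1)"
    and "Re (A$0$0) \<ge> 0" "Re (A$1$1) \<ge> 0"
proof -
  have q: "Im (qform A (\<chi> i. if i = 0 then a else b)) = 0
         \<and> Re (qform A (\<chi> i. if i = 0 then a else b)) \<ge> 0" for a b
    using assms unfolding psd_iff_qform by blast
  show "Im (A$0$0) = 0" "Re (A$0$0) \<ge> 0" using q[of 1 0] unfolding qform_vector by simp_all
  show "Im (A$1$1) = 0" "Re (A$1$1) \<ge> 0" using q[of 0 1] unfolding qform_vector by simp_all
  have "Im (A$0$0 + A$0$1 + A$1$0 + A$1$1) = 0"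
    using q[of 1 1] unfolding qform_vector by (simp add: algebra_simps)
  moreover have "Im (A$0$0 + \<i> * A$0$1 - \<i> * A$1$0 + A$1$1) = 0"
    using q[of 1 \<i>] unfolding qform_vector by (simp add: algebra_simps)
  ultimately show "A$1$0 = cnj (A$0$1)"
    using \<open>Im (A$0$0) = 0\<close> \<open>Im (A$1$1) = 0\<close> by (simp add: complex_eq_iff)
qed

lemma psd_qtrace: "psd A \<Longrightarrow> Im (qtrace A) = 0 \<and> Re (qtrace A) \<ge> 0"
  using psd_entries[of A] unfolding qtrace_def by (simp add: sum_UNIV_2)

lemma qtrace_psd_real: "psd A \<Longrightarrow> qtrace A = complex_of_real (Re (qtrace A))"
  using psd_qtrace complex_eq_iff by auto

lemma psd_add: "psd A \<Longrightarrow> psd B \<Longrightarrow> psd (A + B)"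
  unfolding psd_def psd_blocks_iff_block_qform
  using block_qform_add[of 1 "\<lambda>_ _. A" "\<lambda>_ _. B"] by simp

lemma psd_qscale:
  assumes "psd A" "0 \<le> c"
  shows "psd (qscale (complex_of_real c) A)"
proof -
  have "qform (qscale (complex_of_real c) A) v = c * qform A v" for v
    unfolding qform_def qscale_def matrix_vector_mult_def
    by (simp add: sum_distrib_left algebra_simps)
  then show ?thesis using assms unfolding psd_iff_qform by simp
qed

definition outer :: "complex^2 \<Rightarrow> qmat" where
  "outer u = (\<chi> i j. u$i * cnj (u$j))"

lemma psd_outer: "psd (outer u)"
  unfolding psd_iff_qform
proof
  fix v :: "complex^2"
  define c where "c = (\<Sum>j\<in>UNIV. cnj (u$j) * v$j)"
  have "qform (outer u) v = cnj c * c"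
    unfolding c_def qform_def outer_def matrix_vector_mult_def by (simp add: sum_UNIV_2 algebra_simps)
  then show "Im (qform (outer u) v) = 0 \<and> Re (qform (outer u) v) \<ge> 0"
    using complex_norm_square[of c] by (simp add: mult.commute)
qed

lemma bloch_mat_outer_decomposition:
  assumes "x\<^sup>2 + y\<^sup>2 + z\<^sup>2 \<le> 1"
  obtains u v where "bloch_mat x y z = outer u + outer v"
proof (cases "z = -1")
  case True
  then have "x\<^sup>2 + y\<^sup>2 \<le> 0" using assms by simp
  then have "x = 0" "y = 0" by (simp_all add: sum_power2_le_zero_iff)
  then have "bloch_mat x y z = outer (\<chi> i. if i = 0 then 0 else 1) + outer 0"
    unfolding qmat_eq_iff bloch_mat_def outer_def using True by (simp add: complex_eq_iff)
  then show ?thesis using that by blast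
next
  case False
  have "z\<^sup>2 \<le> 1" using assms zero_le_power2[of x] zero_le_power2[of y] by linarith
  then have "1 + z > 0" using False abs_square_le_1[of z] by (auto simp: abs_le_iff)
  \<comment> \<open>Cholesky factorisation: \<open>u\<close> reproduces the first column, \<open>v\<close> the Schur complement.\<close>
  define s where "s = sqrt ((1 + z) / 2)"
  define q where "q = (1 - z) / 2 - (x\<^sup>2 + y\<^sup>2) / (2 * (1 + z))"
  have s: "s > 0" "s * s = (1 + z) / 2" using \<open>1 + z > 0\<close> unfolding s_def by simp_all
  have "q \<ge> 0" unfolding q_def using assms \<open>1 + z > 0\<close>
    by (simp add: field_simps power2_eq_square)
  define u :: "complex^2" where "u = (\<chi> i. if i = 0 then Complex s 0 else Complex (x / (2 * s)) (y / (2 * s)))"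
  define v :: "complex^2" where "v = (\<chi> i. if i = 0 then 0 else Complex (sqrt q) 0)"
  have "(x / (2 * s))\<^sup>2 + (y / (2 * s))\<^sup>2 = (x\<^sup>2 + y\<^sup>2) / (2 * (1 + z))"
    using s by (simp add: power_divide power_mult_distrib power2_eq_square add_divide_distrib)
  then have entry11: "(x / (2 * s))\<^sup>2 + (y / (2 * s))\<^sup>2 + sqrt q * sqrt q = (1 - z) / 2"
    using \<open>q \<ge> 0\<close> unfolding q_def by simp
  have "bloch_mat x y z = outer u + outer v"
    unfolding qmat_eq_iff bloch_mat_def outer_def u_def v_def
    using s entry11 by (simp add: complex_eq_iff) (simp add: power2_eq_square field_simps)
  then show ?thesis using that by blast
qed

lemma psd_bloch_mat: "x\<^sup>2 + y\<^sup>2 + z\<^sup>2 \<le> 1 \<Longrightarrow> psd (bloch_mat x y z)"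
  by (metis bloch_mat_outer_decomposition psd_add psd_outer)

lemma density_eq_bloch_mat:
  assumes "density \<rho>"
  shows "\<rho> = bloch_mat (Re (qtrace (\<rho> ** pauli_x))) (Re (qtrace (\<rho> ** pauli_y)))
                       (Re (qtrace (\<rho> ** pauli_z)))"
  using assms psd_entries[of \<rho>] unfolding density_def
  by (intro hermitian_eq_bloch_mat) simp_all

section \<open>Completely positive maps and instruments\<close>

lemma completely_positive_clinear: "completely_positive \<Phi> \<Longrightarrow> clinear_map \<Phi>"
  unfolding completely_positive_def by blast

lemma completely_positive_psd: "completely_positive \<Phi> \<Longrightarrow> psd A \<Longrightarrow> psd (\<Phi> A)"
  unfolding completely_positive_def psd_def by auto

lemma completely_positive_id: "completely_positive (\<lambda>A. A)"
  unfolding completely_positive_def clinear_map_def by simp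

lemma completely_positive_zero: "completely_positive (\<lambda>A. 0)"
  unfolding completely_positive_def clinear_map_def psd_blocks_iff_block_qform block_qform_def
  by (simp add: qscale_def vec_eq_iff)

lemma completely_positive_add:
  assumes "completely_positive \<Phi>" "completely_positive \<Psi>"
  shows "completely_positive (\<lambda>A. \<Phi> A + \<Psi> A)"
  using assms unfolding completely_positive_def clinear_map_def psd_blocks_iff_block_qform
  by (simp add: block_qform_add qscale_add_right)

definition measure_prepare :: "(qmat \<Rightarrow> qmat) \<Rightarrow> qmat \<Rightarrow> qmat \<Rightarrow> qmat" where
  "measure_prepare \<Phi> \<tau> A = qscale (qtrace (\<Phi> A)) \<tau>"

lemma clinear_map_measure_prepare: "clinear_map \<Phi> \<Longrightarrow> clinear_map (measure_prepare \<Phi> \<tau>)"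
  unfolding clinear_map_def measure_prepare_def
  by (simp add: qtrace_add qtrace_qscale qscale_add_left qscale_qscale)

lemma completely_positive_measure_prepare_outer:
  assumes "completely_positive \<Phi>"
  shows "completely_positive (measure_prepare \<Phi> (outer u))"
proof -
  have "clinear_map (measure_prepare \<Phi> (outer u))"
    using completely_positive_clinear[OF assms] by (rule clinear_map_measure_prepare)
  moreover have "psd_blocks n (\<lambda>k l. qscale (qtrace (\<Phi> (X k l))) (outer u))"
    if "psd_blocks n X" for n X
  proof -
    have Y: "psd_blocks n (\<lambda>k l. \<Phi> (X k l))"
      using assms that unfolding completely_positive_def by simp
    show ?thesis unfolding psd_blocks_iff_block_qform
    proof
      fix v :: "nat \<Rightarrow> complex^2"
      \<comment> \<open>\<open>tr M = e\<^sub>0\<^sup>* M e\<^sub>0 + e\<^sub>1\<^sup>* M e\<^sub>1\<close>, so the form splits into two forms of the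
        blocks \<open>\<Phi> (X k l)\<close>, at the vectors \<open>c k e\<^sub>m\<close> with \<open>c k = \<langle>u, v k\<rangle>\<close>.\<close>
      define c where "c k = (\<Sum>j\<in>UNIV. cnj (u$j) * v k $ j)" for k
      define w where "w m k = (\<chi> i. if i = m then c k else 0)" for m :: 2 and k
      have "block_qform n (\<lambda>k l. qscale (qtrace (\<Phi> (X k l))) (outer u)) v
          = block_qform n (\<lambda>k l. \<Phi> (X k l)) (w 0) + block_qform n (\<lambda>k l. \<Phi> (X k l)) (w 1)"
        unfolding block_qform_def w_def c_def qscale_def outer_def qtrace_def matrix_vector_mult_def
        by (simp add: sum_UNIV_2 algebra_simps sum.distrib)
      then show "Im (block_qform n (\<lambda>k l. qscale (qtrace (\<Phi> (X k l))) (outer u)) v) = 0 \<and>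
            0 \<le> Re (block_qform n (\<lambda>k l. qscale (qtrace (\<Phi> (X k l))) (outer u)) v)"
        using Y unfolding psd_blocks_iff_block_qform by simp
    qed
  qed
  ultimately show ?thesis unfolding completely_positive_def measure_prepare_def by blast
qed

lemma completely_positive_measure_prepare:
  assumes "completely_positive \<Phi>" "\<tau> = outer u + outer v"
  shows "completely_positive (measure_prepare \<Phi> \<tau>)"
proof -
  have "measure_prepare \<Phi> \<tau> = (\<lambda>A. measure_prepare \<Phi> (outer u) A + measure_prepare \<Phi> (outer v) A)"
    unfolding assms(2) measure_prepare_def by (simp add: qscale_add_right fun_eq_iff)
  then show ?thesis
    using completely_positive_add completely_positive_measure_prepare_outer[OF assms(1)] by metis
qed

lemma Re_qtrace_clinear_comb:
  assumes "clinear_map \<Phi>"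
  shows "Re (qtrace (\<Phi> (qscale (complex_of_real a) A + qscale (complex_of_real b) B)))
       = a * Re (qtrace (\<Phi> A)) + b * Re (qtrace (\<Phi> B))"
  using assms unfolding clinear_map_def by (simp add: qtrace_qscale qtrace_add)

lemma instrument_completely_positive: "instrument J \<Longrightarrow> completely_positive (J a)"
  unfolding instrument_def by blast

lemma instrument_psd: "instrument J \<Longrightarrow> psd A \<Longrightarrow> psd (J a A)"
  by (rule completely_positive_psd[OF instrument_completely_positive])

lemma instrument_Re_qtrace_le:
  assumes "instrument J" "psd A"
  shows "Re (qtrace (J a A)) \<le> Re (qtrace A)"
proof -
  have nonneg: "Re (qtrace (J b A)) \<ge> 0" for b
    using psd_qtrace[OF instrument_psd[OF assms]] by blast
  have "qtrace (J True A) + qtrace (J False A) = qtrace A"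
    using assms(1) unfolding instrument_def qtrace_add by blast
  then have "Re (qtrace (J True A)) + Re (qtrace (J False A)) = Re (qtrace A)"
    by (metis plus_complex.sel(1))
  then show ?thesis using nonneg[of True] nonneg[of False] by (cases a) auto
qed

lemma seq_prob_le_1:
  assumes "density \<rho>" "instrument (I x)" "instrument (I y)"
  shows "seq_prob \<rho> I a b x y \<le> 1"
proof -
  have "psd \<rho>" "qtrace \<rho> = 1" using assms(1) unfolding density_def by auto
  have "Re (qtrace (I y b (I x a \<rho>))) \<le> Re (qtrace (I x a \<rho>))"
    using assms(3) instrument_psd[OF assms(2) \<open>psd \<rho>\<close>] by (rule instrument_Re_qtrace_le)
  also have "\<dots> \<le> Re (qtrace \<rho>)" using assms(2) \<open>psd \<rho>\<close> by (rule instrument_Re_qtrace_le)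
  finally show ?thesis unfolding seq_prob_def \<open>qtrace \<rho> = 1\<close> by simp
qed

lemma density_post_state:
  assumes "density \<rho>" "instrument (I x)" "Re (qtrace (I x True \<rho>)) > 0"
  shows "density (post_state \<rho> I x)"
proof -
  define t where "t = qtrace (I x True \<rho>)"
  have psd: "psd (I x True \<rho>)"
    using assms(1,2) instrument_psd unfolding density_def by blast
  then have "t = complex_of_real (Re t)" unfolding t_def by (rule qtrace_psd_real)
  then have inv: "1 / t = complex_of_real (1 / Re t)" by (metis of_real_1 of_real_divide)
  have "Re t > 0" using assms(3) unfolding t_def .
  then have "psd (post_state \<rho> I x)"
    unfolding post_state_def t_def[symmetric] inv using psd by (intro psd_qscale) auto
  moreover have "t \<noteq> 0" using \<open>Re t > 0\<close> by auto
  then have "qtrace (post_state \<rho> I x) = 1"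
    unfolding post_state_def qtrace_qscale t_def[symmetric] by simp
  ultimately show ?thesis unfolding density_def ..
qed

lemma post_state_rescaled:
  assumes "density \<rho>" "instrument (I x)" "Re (qtrace (I x True \<rho>)) > 0"
  shows "I x True \<rho> = qscale (complex_of_real (Re (qtrace (I x True \<rho>)))) (post_state \<rho> I x)"
proof -
  have "psd (I x True \<rho>)"
    using assms(1,2) instrument_psd unfolding density_def by blast
  then have "complex_of_real (Re (qtrace (I x True \<rho>))) = qtrace (I x True \<rho>)"
    by (rule qtrace_psd_real[symmetric])
  moreover have "qtrace (I x True \<rho>) \<noteq> 0" using assms(3) by auto
  ultimately show ?thesis unfolding post_state_def by (simp add: qscale_qscale qscale_one)
qed

lemma instrument_trivial: "instrument (\<lambda>a A. if a then A else 0)"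
  unfolding instrument_def
proof (intro conjI allI)
  show "completely_positive (\<lambda>A. if a then A else 0)" for a
    by (cases a) (simp_all add: completely_positive_id completely_positive_zero)
qed simp

lemma instrument_measure_prepare:
  assumes "instrument J" "\<tau> = outer u + outer v" "qtrace \<tau> = 1"
  shows "instrument (J(True := measure_prepare (J True) \<tau>))"
  using assms completely_positive_measure_prepare[OF instrument_completely_positive]
  unfolding instrument_def
  by (simp add: measure_prepare_def qtrace_add qtrace_qscale)

section \<open>The optimisation problem\<close>

definition B1_admissible ::
  "real \<Rightarrow> real \<Rightarrow> real \<Rightarrow> qmat \<Rightarrow> (nat \<Rightarrow> bool \<Rightarrow> qmat \<Rightarrow> qmat) \<Rightarrow> bool" where
  "B1_admissible p w0 w1 \<rho> I \<longleftrightarrow> density \<rho> \<and> bloch_len \<rho> = p \<and> instrument (I 0) \<and> instrument (I 1) \<and>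
     Re (qtrace (I 0 True \<rho>)) > 0 \<and> Re (qtrace (I 1 True \<rho>)) > 0 \<and>
     bloch_len (post_state \<rho> I 0) = w0 \<and> bloch_len (post_state \<rho> I 1) = w1"

lemma B1_feasible_eq: "B1_feasible p w0 w1 = {B1_expr \<rho> I | \<rho> I. B1_admissible p w0 w1 \<rho> I}"
  unfolding B1_feasible_def B1_admissible_def ..

lemma B1_feasible_bdd_above: "bdd_above (B1_feasible p w0 w1)"
proof (rule bdd_aboveI)
  fix b assume "b \<in> B1_feasible p w0 w1"
  then obtain \<rho> I where b: "b = B1_expr \<rho> I"
    and I: "density \<rho>" "instrument (I 0)" "instrument (I 1)"
    unfolding B1_feasible_eq B1_admissible_def by blast
  show "b \<le> 4"
    using seq_prob_le_1[of \<rho> I 0 0, OF I(1,2,2)] seq_prob_le_1[of \<rho> I 1 1, OF I(1,3,3)]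
      seq_prob_le_1[of \<rho> I 0 1, OF I(1,2,3)] seq_prob_le_1[of \<rho> I 1 0, OF I(1,3,2)]
    unfolding b B1_expr_def by (smt (verit))
qed

lemma B1_feasible_nonempty:
  assumes "0 \<le> p" "p \<le> 1" "0 \<le> w0" "w0 \<le> 1" "0 \<le> w1" "w1 \<le> 1"
  shows "B1_feasible p w0 w1 \<noteq> {}"
proof -
  define \<tau> where "\<tau> x = bloch_mat 0 0 (if x = 0 then w0 else w1)" for x :: nat
  define J :: "bool \<Rightarrow> qmat \<Rightarrow> qmat" where "J = (\<lambda>a A. if a then A else 0)"
  define I where "I x = J(True := measure_prepare (J True) (\<tau> x))" for x
  have "instrument (I x)" for x
  proof -
    have "(if x = 0 then w0 else w1)\<^sup>2 \<le> 1" using assms by (simp add: power_le_one)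
    then obtain u v where uv: "\<tau> x = outer u + outer v"
      unfolding \<tau>_def by (metis bloch_mat_outer_decomposition add_0 zero_power2)
    show ?thesis
      unfolding I_def J_def using instrument_measure_prepare[OF instrument_trivial uv]
      by (simp add: \<tau>_def qtrace_bloch_mat)
  qed
  moreover have "density (bloch_mat 0 0 p)"
    unfolding density_def using assms by (simp add: psd_bloch_mat qtrace_bloch_mat power_le_one)
  moreover have "I x True (bloch_mat 0 0 p) = \<tau> x" for x
    unfolding I_def J_def measure_prepare_def by (simp add: qtrace_bloch_mat qscale_one)
  ultimately have "B1_admissible p w0 w1 (bloch_mat 0 0 p) I"
    unfolding B1_admissible_def post_state_def using assms
    by (simp add: \<tau>_def qtrace_bloch_mat bloch_len_bloch_mat qscale_one)
  then show ?thesis unfolding B1_feasible_eq by blast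
qed

lemma B1_admissible_swap:
  "B1_admissible p w0 w1 \<rho> I \<Longrightarrow> B1_admissible p w1 w0 \<rho> (\<lambda>x. if x = 0 then I 1 else I 0)"
  unfolding B1_admissible_def post_state_def by simp

lemma B1_expr_swap: "B1_expr \<rho> (\<lambda>x. if x = 0 then I 1 else I 0) = B1_expr \<rho> I"
  unfolding B1_expr_def seq_prob_def by simp

lemma B1_swap: "B1 p w0 w1 = B1 p w1 w0"
proof -
  have "B1_feasible p w0 w1 \<subseteq> B1_feasible p w1 w0" for w0 w1
  proof
    fix b assume "b \<in> B1_feasible p w0 w1"
    then obtain \<rho> I where "b = B1_expr \<rho> I" "B1_admissible p w0 w1 \<rho> I"
      unfolding B1_feasible_eq by blast
    then have "b = B1_expr \<rho> (\<lambda>x. if x = 0 then I 1 else I 0)"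
      and "B1_admissible p w1 w0 \<rho> (\<lambda>x. if x = 0 then I 1 else I 0)"
      by (simp_all add: B1_expr_swap B1_admissible_swap)
    then show "b \<in> B1_feasible p w1 w0" unfolding B1_feasible_eq by blast
  qed
  then show ?thesis unfolding B1_def by (metis subset_antisym)
qed

definition B1_weight :: "(nat \<Rightarrow> bool \<Rightarrow> qmat \<Rightarrow> qmat) \<Rightarrow> qmat \<Rightarrow> real" where
  "B1_weight I \<sigma> = Re (qtrace (I 0 True \<sigma>)) + Re (qtrace (I 1 False \<sigma>))"

lemma B1_expr_eq_B1_weight:
  assumes "clinear_map (I 0 True)" "clinear_map (I 1 False)"
    and "I 0 True \<rho> = qscale (complex_of_real t) \<sigma>"
  shows "B1_expr \<rho> I = t * B1_weight I \<sigma> + seq_prob \<rho> I True True 1 1 + seq_prob \<rho> I True False 1 0"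
  using assms unfolding B1_expr_def seq_prob_def B1_weight_def clinear_map_def
  by (simp add: qtrace_qscale algebra_simps)

definition replace_post_state ::
  "(nat \<Rightarrow> bool \<Rightarrow> qmat \<Rightarrow> qmat) \<Rightarrow> qmat \<Rightarrow> nat \<Rightarrow> bool \<Rightarrow> qmat \<Rightarrow> qmat" where
  "replace_post_state I \<tau> = I(0 := (I 0)(True := measure_prepare (I 0 True) \<tau>))"

lemma B1_admissible_replace_post_state:
  assumes "B1_admissible p w0 w1 \<rho> I" "sqrt (x\<^sup>2 + y\<^sup>2 + z\<^sup>2) = w" "w \<le> 1"
  shows "B1_admissible p w w1 \<rho> (replace_post_state I (bloch_mat x y z))"
proof -
  let ?I' = "replace_post_state I (bloch_mat x y z)"
  have "x\<^sup>2 + y\<^sup>2 + z\<^sup>2 \<le> 1" using assms(2,3) by (metis real_sqrt_le_1_iff order_trans)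
  then obtain u v where uv: "bloch_mat x y z = outer u + outer v"
    by (rule bloch_mat_outer_decomposition)
  have "instrument (I 0)" using assms(1) unfolding B1_admissible_def by blast
  then have "instrument (?I' 0)"
    using instrument_measure_prepare[OF _ uv qtrace_bloch_mat] unfolding replace_post_state_def by simp
  moreover have "qtrace (I 0 True \<rho>) \<noteq> 0" using assms(1) unfolding B1_admissible_def by auto
  then have "post_state \<rho> ?I' 0 = bloch_mat x y z"
    unfolding post_state_def replace_post_state_def measure_prepare_def
    by (simp add: qtrace_qscale qtrace_bloch_mat qscale_qscale qscale_one)
  moreover have "qtrace (?I' 0 True \<rho>) = qtrace (I 0 True \<rho>)"
    by (simp add: replace_post_state_def measure_prepare_def qtrace_qscale qtrace_bloch_mat)
  ultimately show ?thesis
    using assms(1,2) unfolding B1_admissible_def post_state_def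
    by (simp add: replace_post_state_def bloch_len_bloch_mat)
qed

lemma B1_expr_le_replace_post_state:
  assumes "B1_admissible p w0 w1 \<rho> I" "qtrace \<tau> = 1"
    and "B1_weight I (post_state \<rho> I 0) \<le> B1_weight I \<tau>"
  shows "B1_expr \<rho> I \<le> B1_expr \<rho> (replace_post_state I \<tau>)"
proof -
  define t where "t = Re (qtrace (I 0 True \<rho>))"
  have adm: "density \<rho>" "instrument (I 0)" "instrument (I 1)" "t > 0"
    using assms(1) unfolding B1_admissible_def t_def by auto
  have lin: "clinear_map (I x a)" if "x = 0 \<or> x = 1" for x a
    using that adm(2,3) by (auto intro: completely_positive_clinear instrument_completely_positive)
  have "psd (I 0 True \<rho>)" using adm(1,2) instrument_psd unfolding density_def by blast
  then have tr: "qtrace (I 0 True \<rho>) = complex_of_real t" unfolding t_def by (rule qtrace_psd_real)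
  have "B1_expr \<rho> I = t * B1_weight I (post_state \<rho> I 0)
      + seq_prob \<rho> I True True 1 1 + seq_prob \<rho> I True False 1 0"
    using lin post_state_rescaled[of \<rho> I 0] adm unfolding t_def
    by (intro B1_expr_eq_B1_weight) auto
  moreover have "B1_expr \<rho> (replace_post_state I \<tau>) = t * B1_weight I \<tau>
      + seq_prob \<rho> I True True 1 1 + seq_prob \<rho> I True False 1 0"
  proof -
    have "clinear_map (replace_post_state I \<tau> 0 True)"
      using lin[of 0 True] unfolding replace_post_state_def by (simp add: clinear_map_measure_prepare)
    moreover have "replace_post_state I \<tau> 0 True \<rho> = qscale (complex_of_real t) \<tau>"
      using tr unfolding replace_post_state_def measure_prepare_def by simp
    ultimately show ?thesis
      using lin[of 1 False] assms(2)
      by (subst B1_expr_eq_B1_weight)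
        (simp_all add: B1_weight_def seq_prob_def replace_post_state_def measure_prepare_def qtrace_qscale)
  qed
  ultimately show ?thesis using assms(3) adm(4) by (simp add: mult_left_mono)
qed

lemma B1_admissible_dominated:
  assumes "B1_admissible p w0 w1 \<rho> I" "w0 \<le> w" "w \<le> 1"
  obtains I' where "B1_admissible p w w1 \<rho> I'" "B1_expr \<rho> I \<le> B1_expr \<rho> I'"
proof -
  define \<sigma> where "\<sigma> = post_state \<rho> I 0"
  have adm: "density \<rho>" "instrument (I 0)" "instrument (I 1)" "Re (qtrace (I 0 True \<rho>)) > 0"
    "bloch_len \<sigma> = w0"
    using assms(1) unfolding B1_admissible_def \<sigma>_def by auto
  define rx ry rz where "rx = Re (qtrace (\<sigma> ** pauli_x))" and "ry = Re (qtrace (\<sigma> ** pauli_y))"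
    and "rz = Re (qtrace (\<sigma> ** pauli_z))"
  have "density \<sigma>" unfolding \<sigma>_def using adm(1,2,4) by (rule density_post_state)
  then have \<sigma>: "\<sigma> = bloch_mat rx ry rz" unfolding rx_def ry_def rz_def by (rule density_eq_bloch_mat)
  have "sqrt (rx\<^sup>2 + ry\<^sup>2 + rz\<^sup>2) \<le> w"
    using adm(5) assms(2) unfolding \<sigma> bloch_len_bloch_mat by simp
  then obtain a x y z where a: "0 \<le> a" "a \<le> 1" and len: "sqrt (x\<^sup>2 + y\<^sup>2 + z\<^sup>2) = w"
    and split: "\<sigma> = qscale (complex_of_real a) (bloch_mat x y z)
                  + qscale (complex_of_real (1 - a)) (bloch_mat (- x) (- y) (- z))"
    using assms(3) unfolding \<sigma> by (rule bloch_mat_antipodal_split)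
  have lin: "clinear_map (I 0 True)" "clinear_map (I 1 False)"
    using adm(2,3) by (simp_all add: completely_positive_clinear instrument_completely_positive)
  \<comment> \<open>\<open>B1_weight I\<close> is affine, so on the chord through \<open>\<sigma>\<close> it is maximised at an endpoint.\<close>
  have "B1_weight I \<sigma> = a * B1_weight I (bloch_mat x y z) + (1 - a) * B1_weight I (bloch_mat (- x) (- y) (- z))"
    unfolding split B1_weight_def Re_qtrace_clinear_comb[OF lin(1)] Re_qtrace_clinear_comb[OF lin(2)]
    by (simp add: algebra_simps)
  also have "\<dots> \<le> max (B1_weight I (bloch_mat x y z)) (B1_weight I (bloch_mat (- x) (- y) (- z)))"
    using a by (intro convex_bound_le) auto
  finally have "B1_weight I \<sigma> \<le> B1_weight I (bloch_mat x y z)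
      \<or> B1_weight I \<sigma> \<le> B1_weight I (bloch_mat (- x) (- y) (- z))"
    by (simp add: le_max_iff_disj)
  moreover have "sqrt ((- x)\<^sup>2 + (- y)\<^sup>2 + (- z)\<^sup>2) = w" using len by simp
  ultimately obtain x' y' z' where len': "sqrt (x'\<^sup>2 + y'\<^sup>2 + z'\<^sup>2) = w"
    and better: "B1_weight I (post_state \<rho> I 0) \<le> B1_weight I (bloch_mat x' y' z')"
    using len unfolding \<sigma>_def by blast
  show ?thesis
    using that B1_admissible_replace_post_state[OF assms(1) len' assms(3)]
      B1_expr_le_replace_post_state[OF assms(1) qtrace_bloch_mat better] .
qed

lemma B1_mono_first:
  assumes "0 \<le> p" "p \<le> 1" "0 \<le> w0" "w0 \<le> w" "w \<le> 1" "0 \<le> w1" "w1 \<le> 1"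
  shows "B1 p w0 w1 \<le> B1 p w w1"
  unfolding B1_def
proof (rule cSup_mono)
  show "B1_feasible p w0 w1 \<noteq> {}" using assms by (intro B1_feasible_nonempty) auto
  show "bdd_above (B1_feasible p w w1)" by (rule B1_feasible_bdd_above)
  fix b assume "b \<in> B1_feasible p w0 w1"
  then obtain \<rho> I where "b = B1_expr \<rho> I" "B1_admissible p w0 w1 \<rho> I"
    unfolding B1_feasible_eq by blast
  with assms(4,5) obtain I' where "B1_admissible p w w1 \<rho> I'" "b \<le> B1_expr \<rho> I'"
    by (metis B1_admissible_dominated)
  then show "\<exists>b'\<in>B1_feasible p w w1. b \<le> b'" unfolding B1_feasible_eq by blast
qed

theorem mainTheorem4:
  fixes p :: real
  assumes "0 \<le> p" "p \<le> 1"
  shows "(\<forall>w1\<in>{0..1}. mono_on {0..1} (\<lambda>w0. B1 p w0 w1))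
       \<and> (\<forall>w0\<in>{0..1}. mono_on {0..1} (\<lambda>w1. B1 p w0 w1))
       \<and> (\<forall>w0\<in>{0..1}. \<forall>w1\<in>{0..1}. B1 p (max w0 w1) (max w0 w1) \<ge> B1 p w0 w1)"
proof (intro conjI ballI)
  show "mono_on {0..1} (\<lambda>w0. B1 p w0 w1)" if "w1 \<in> {0..1}" for w1
    using assms that by (intro mono_onI B1_mono_first) auto
  show "mono_on {0..1} (\<lambda>w1. B1 p w0 w1)" if "w0 \<in> {0..1}" for w0
    using assms that by (intro mono_onI) (auto simp: B1_swap[of p w0] intro: B1_mono_first)
next
  fix w0 w1 :: real assume w: "w0 \<in> {0..1}" "w1 \<in> {0..1}"
  have "B1 p w0 w1 \<le> B1 p (max w0 w1) w1"
    using assms w by (intro B1_mono_first) auto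
  also have "\<dots> = B1 p w1 (max w0 w1)" by (rule B1_swap)
  also have "\<dots> \<le> B1 p (max w0 w1) (max w0 w1)"
    using assms w by (intro B1_mono_first) auto
  finally show "B1 p w0 w1 \<le> B1 p (max w0 w1) (max w0 w1)" .
qed

end
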